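(* Let $R$ be a zero-dimensional Gorenstein ring and $M$ a finitely generated $R$-module. Then $\mathrm{char}_R(M)=\mathrm{Ann}_R(M)$.
   Context: $M^*=\mathrm{Hom}_R(M,R)$, $\bigcap^n_RM=(\bigwedge^n_R(M^* ))^*$. For a finitely generated $R$-module $M$, choose $n>0$ and an exact sequence $0\to N\to R^n\to M\to0$ and set $\mathrm{char}_R(M)=\mathrm{im}(\bigcap^n_RN\to\bigcap^n_RR^n=R)$ (independent of the choice). *)

theory Defs
  imports Main "HOL.Modules"
begin

definition ring_ideal :: "'a::comm_ring_1 set \<Rightarrow> bool" where
  "ring_ideal I \<longleftrightarrow> 0 \<in> I \<and> (\<forall>x\<in>I. \<forall>y\<in>I. x + y \<in> I) \<and> (\<forall>r. \<forall>x\<in>I. r * x \<in> I)"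

definition prime_ideal :: "'a::comm_ring_1 set \<Rightarrow> bool" where
  "prime_ideal P \<longleftrightarrow> ring_ideal P \<and> P \<noteq> UNIV \<and> (\<forall>a b. a * b \<in> P \<longrightarrow> a \<in> P \<or> b \<in> P)"

definition maximal_ideal :: "'a::comm_ring_1 set \<Rightarrow> bool" where
  "maximal_ideal P \<longleftrightarrow> ring_ideal P \<and> P \<noteq> UNIV \<and>
     (\<forall>J. ring_ideal J \<and> P \<subseteq> J \<longrightarrow> J = P \<or> J = UNIV)"

definition noetherian_ring :: "'a::comm_ring_1 itself \<Rightarrow> bool" where
  "noetherian_ring _ \<longleftrightarrow> (\<forall>I::'a set. ring_ideal I \<longrightarrow>
     (\<exists>S. finite S \<and> S \<subseteq> I \<and> I = {\<Sum>s\<in>S. c s * s | c. True}))"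

text \<open>Krull dimension zero: every prime ideal is maximal (the ring is nonzero by comm_ring_1).\<close>
definition krull_dim_zero :: "'a::comm_ring_1 itself \<Rightarrow> bool" where
  "krull_dim_zero _ \<longleftrightarrow> (\<forall>P::'a set. prime_ideal P \<longrightarrow> maximal_ideal P)"

text \<open>R is injective as a module over itself (Baer's criterion).\<close>
definition self_injective :: "'a::comm_ring_1 itself \<Rightarrow> bool" where
  "self_injective _ \<longleftrightarrow> (\<forall>I::'a set. \<forall>\<phi>. ring_ideal I \<and>
     (\<forall>x\<in>I. \<forall>y\<in>I. \<phi> (x + y) = \<phi> x + \<phi> y) \<and> (\<forall>r. \<forall>x\<in>I. \<phi> (r * x) = r * \<phi> x)
     \<longrightarrow> (\<exists>c. \<forall>x\<in>I. \<phi> x = c * x))"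

text \<open>A zero-dimensional Gorenstein ring: Noetherian, Krull dimension 0, and of
  injective dimension 0 over itself, i.e. self-injective.\<close>
definition zero_dim_gorenstein :: "'a::comm_ring_1 itself \<Rightarrow> bool" where
  "zero_dim_gorenstein T \<longleftrightarrow> noetherian_ring T \<and> krull_dim_zero T \<and> self_injective T"

definition freemod :: "nat \<Rightarrow> (nat \<Rightarrow> 'a::comm_ring_1) set" where
  "freemod n = {x. \<forall>i\<ge>n. x i = 0}"

text \<open>N^* = Hom_R(N,R) for a submodule N of R^n, functions taken to be 0 outside N.\<close>
definition dual :: "(nat \<Rightarrow> 'a::comm_ring_1) set \<Rightarrow> ((nat \<Rightarrow> 'a) \<Rightarrow> 'a) set" where
  "dual N = {\<phi>. (\<forall>x\<in>N. \<forall>y\<in>N. \<phi> (\<lambda>i. x i + y i) = \<phi> x + \<phi> y) \<and>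
                (\<forall>r. \<forall>x\<in>N. \<phi> (\<lambda>i. r * x i) = r * \<phi> x) \<and>
                (\<forall>x. x \<notin> N \<longrightarrow> \<phi> x = 0)}"

text \<open>Alternating R-multilinear maps D^n -> R, i.e. elements of (wedge^n D)^*.\<close>
definition alt_form :: "nat \<Rightarrow> ('v \<Rightarrow> 'a::comm_ring_1) set \<Rightarrow> ((nat \<Rightarrow> ('v \<Rightarrow> 'a)) \<Rightarrow> 'a) \<Rightarrow> bool" where
  "alt_form n D \<Phi> \<longleftrightarrow>
    (\<forall>f k \<phi> \<psi>. (\<forall>i<n. f i \<in> D) \<and> k < n \<and> \<phi> \<in> D \<and> \<psi> \<in> D \<longrightarrow>
        \<Phi> (f(k := (\<lambda>x. \<phi> x + \<psi> x))) = \<Phi> (f(k := \<phi>)) + \<Phi> (f(k := \<psi>))) \<and>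
    (\<forall>f k r \<phi>. (\<forall>i<n. f i \<in> D) \<and> k < n \<and> \<phi> \<in> D \<longrightarrow>
        \<Phi> (f(k := (\<lambda>x. r * \<phi> x))) = r * \<Phi> (f(k := \<phi>))) \<and>
    (\<forall>f i j. (\<forall>l<n. f l \<in> D) \<and> i < n \<and> j < n \<and> i \<noteq> j \<and> f i = f j \<longrightarrow> \<Phi> f = 0)"

text \<open>char_R(R^n/N): the image of cap^n N -> cap^n R^n = R, where the identification
  cap^n R^n = R is evaluation at e_1^* wedge ... wedge e_n^*, and the map is dual to the
  restriction wedge^n (R^n)^* -> wedge^n N^*.  So the image is the set of values of
  alternating forms on N^* at the restricted coordinate functionals.\<close>
definition char_ideal :: "nat \<Rightarrow> (nat \<Rightarrow> 'a::comm_ring_1) set \<Rightarrow> 'a set" where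
  "char_ideal n N = {\<Phi> (\<lambda>i x. if x \<in> N then x i else 0) | \<Phi>. alt_form n (dual N) \<Phi>}"

definition annihilator :: "('a::comm_ring_1 \<Rightarrow> 'm::ab_group_add \<Rightarrow> 'm) \<Rightarrow> 'a set" where
  "annihilator scale = {r. \<forall>m. scale r m = 0}"

end

theory Submission
  imports Defs "HOL-Combinatorics.Permutations"
begin

text \<open>Write M = R^n/N. Let c = \<Phi>(e_1^*|N, ..., e_n^*|N) lie in char(M) and let k be a
  linear form on R^n vanishing on N. On N we have k_j e_j^* = -\<Sum>_{i\<noteq>j} k_i e_i^*, so
  multilinearity and alternation give c k_j = 0. Hence c R^n lies in the double orthogonal of N,
  which is N itself: N is finitely generated since R is Noetherian, and linear forms on
  submodules of R^n extend to R^n since R is self-injective (Baer's criterion, one coordinate at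
  a time). Conversely, if c R^n \<subseteq> N, extend every functional on N to a coefficient vector;
  c times the coefficients no longer depends on the choice, so \<Phi>(F) = c det(coefficients of F_i)
  is an alternating form on N^* with \<Phi>(e^*|N) = c.\<close>

section \<open>Submodules of R^n\<close>

definition submodule :: "nat \<Rightarrow> (nat \<Rightarrow> 'a::comm_ring_1) set \<Rightarrow> bool" where
  "submodule n L \<longleftrightarrow> L \<subseteq> freemod n \<and> (\<lambda>i. 0) \<in> L \<and>
     (\<forall>x\<in>L. \<forall>y\<in>L. (\<lambda>i. x i + y i) \<in> L) \<and> (\<forall>r. \<forall>x\<in>L. (\<lambda>i. r * x i) \<in> L)"

definition linear_on :: "(nat \<Rightarrow> 'a::comm_ring_1) set \<Rightarrow> ((nat \<Rightarrow> 'a) \<Rightarrow> 'a) \<Rightarrow> bool" where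
  "linear_on L \<phi> \<longleftrightarrow> (\<forall>x\<in>L. \<forall>y\<in>L. \<phi> (\<lambda>i. x i + y i) = \<phi> x + \<phi> y) \<and>
     (\<forall>r. \<forall>x\<in>L. \<phi> (\<lambda>i. r * x i) = r * \<phi> x)"

lemma submodule_zero: "submodule n L \<Longrightarrow> (\<lambda>i. 0) \<in> L"
  unfolding submodule_def by blast

lemma submodule_add: "submodule n L \<Longrightarrow> x \<in> L \<Longrightarrow> y \<in> L \<Longrightarrow> (\<lambda>i. x i + y i) \<in> L"
  unfolding submodule_def by blast

lemma submodule_smult: "submodule n L \<Longrightarrow> x \<in> L \<Longrightarrow> (\<lambda>i. r * x i) \<in> L"
  unfolding submodule_def by blast

lemma submodule_vanishes: "submodule n L \<Longrightarrow> x \<in> L \<Longrightarrow> n \<le> i \<Longrightarrow> x i = 0"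
  unfolding submodule_def freemod_def by blast

lemma submodule_diff:
  assumes "submodule n L" "x \<in> L" "y \<in> L"
  shows "(\<lambda>i. x i - y i) \<in> L"
  using submodule_add[OF assms(1,2) submodule_smult[OF assms(1,3), of "-1"]] by simp

lemma submodule_lincomb:
  fixes p :: nat
  assumes "submodule n L" "\<forall>j<p. g j \<in> L"
  shows "(\<lambda>i. \<Sum>j<p. c j * g j i) \<in> L"
  using assms(2)
proof (induction p)
  case 0
  then show ?case using submodule_zero[OF assms(1)] by simp
next
  case (Suc p)
  have "(\<lambda>i. (\<Sum>j<p. c j * g j i) + c p * g p i) \<in> L"
    using Suc submodule_add[OF assms(1)] submodule_smult[OF assms(1)] by simp
  then show ?case by simp
qed

lemma submodule_coordinate_kernel:
  assumes "submodule (Suc m) L"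
  shows "submodule m {y \<in> L. y m = 0}"
proof -
  have "{y \<in> L. y m = 0} \<subseteq> freemod m"
  proof
    fix y assume y: "y \<in> {y \<in> L. y m = 0}"
    have "y i = 0" if "m \<le> i" for i
      using y submodule_vanishes[OF assms, of y i] that by (cases "i = m") auto
    then show "y \<in> freemod m" unfolding freemod_def by blast
  qed
  then show ?thesis using assms unfolding submodule_def by auto
qed

lemma submodule_coordinate_ideal:
  assumes "submodule n L"
  shows "ring_ideal ((\<lambda>y. y m) ` L)"
  unfolding ring_ideal_def
proof (intro conjI ballI allI)
  show "0 \<in> (\<lambda>y. y m) ` L"
    using submodule_zero[OF assms] by force
next
  fix s t assume "s \<in> (\<lambda>y. y m) ` L" "t \<in> (\<lambda>y. y m) ` L"
  then show "s + t \<in> (\<lambda>y. y m) ` L"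
    using submodule_add[OF assms] by force
next
  fix r t assume "t \<in> (\<lambda>y. y m) ` L"
  then show "r * t \<in> (\<lambda>y. y m) ` L"
    using submodule_smult[OF assms] by force
qed

lemma linear_on_add: "linear_on L \<phi> \<Longrightarrow> x \<in> L \<Longrightarrow> y \<in> L \<Longrightarrow> \<phi> (\<lambda>i. x i + y i) = \<phi> x + \<phi> y"
  unfolding linear_on_def by blast

lemma linear_on_smult: "linear_on L \<phi> \<Longrightarrow> x \<in> L \<Longrightarrow> \<phi> (\<lambda>i. r * x i) = r * \<phi> x"
  unfolding linear_on_def by blast

lemma linear_on_zero:
  assumes "submodule n L" "linear_on L \<phi>"
  shows "\<phi> (\<lambda>i. 0) = 0"
  using linear_on_smult[OF assms(2) submodule_zero[OF assms(1)], of 0] by simp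

lemma linear_on_diff:
  assumes "submodule n L" "linear_on L \<phi>" "x \<in> L" "y \<in> L"
  shows "\<phi> (\<lambda>i. x i - y i) = \<phi> x - \<phi> y"
  using linear_on_add[OF assms(2,3) submodule_smult[OF assms(1,4)], of "- 1"]
    linear_on_smult[OF assms(2,4), of "- 1"] by simp

lemma linear_on_subset: "linear_on L \<phi> \<Longrightarrow> L' \<subseteq> L \<Longrightarrow> linear_on L' \<phi>"
  unfolding linear_on_def by blast

lemma linear_on_minus_dot:
  assumes "linear_on L \<phi>"
  shows "linear_on L (\<lambda>y. \<phi> y - (\<Sum>i<m. a i * y i))"
  using assms unfolding linear_on_def
  by (simp add: algebra_simps sum.distrib sum_distrib_left)

lemma dot_lincomb:
  fixes k c :: "nat \<Rightarrow> 'a::comm_semiring_0"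
  shows "(\<Sum>i<n. k i * (\<Sum>j<p. c j * g j i)) = (\<Sum>j<p. c j * (\<Sum>i<n. k i * g j i))"
proof -
  have "(\<Sum>i<n. k i * (\<Sum>j<p. c j * g j i)) = (\<Sum>i<n. \<Sum>j<p. c j * (k i * g j i))"
    by (simp add: sum_distrib_left mult.left_commute)
  also have "\<dots> = (\<Sum>j<p. \<Sum>i<n. c j * (k i * g j i))"
    by (rule sum.swap)
  finally show ?thesis by (simp add: sum_distrib_left)
qed

lemma sum_lessThan_add:
  fixes b :: nat
  shows "(\<Sum>j<a + b. f j) = (\<Sum>j<a. f j) + (\<Sum>j<b. f (a + j))"
  by (induction b) (simp_all add: add.assoc)

lemma sum_lessThan_delta:
  fixes x :: "nat \<Rightarrow> 'a::comm_ring_1"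
  assumes "j < n"
  shows "(\<Sum>i<n. (if i = j then 1 else 0) * x i) = x j"
  using assms by (simp add: if_distrib[of "\<lambda>t. t * _"] sum.delta cong: if_cong)

lemma noetherian_ideal_generators:
  assumes "noetherian_ring TYPE('a::comm_ring_1)" "ring_ideal (I :: 'a set)"
  obtains q :: nat and h where "\<forall>j<q. h j \<in> I" "\<forall>t\<in>I. \<exists>e. t = (\<Sum>j<q. e j * h j)"
proof -
  obtain S where "finite S" "S \<subseteq> I" and S_span: "I = {\<Sum>s\<in>S. c s * s | c. True}"
    using assms unfolding noetherian_ring_def by meson
  then obtain q :: nat and h where h: "S = h ` {..<q}" "inj_on h {..<q}"
    using finite_imp_nat_seg_image_inj_on[OF \<open>finite S\<close>] unfolding lessThan_def by metis
  have "\<forall>t\<in>I. \<exists>e. t = (\<Sum>j<q. e j * h j)"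
  proof
    fix t assume "t \<in> I"
    then obtain c where "t = (\<Sum>s\<in>S. c s * s)"
      using S_span by blast
    also have "\<dots> = (\<Sum>j<q. c (h j) * h j)"
      using sum.reindex[OF h(2)] h(1) by simp
    finally show "\<exists>e. t = (\<Sum>j<q. e j * h j)"
      by (intro exI[of _ "\<lambda>j. c (h j)"])
  qed
  moreover have "\<forall>j<q. h j \<in> I"
    using \<open>S \<subseteq> I\<close> h(1) by auto
  ultimately show ?thesis
    using that by blast
qed

lemma submodule_finitely_generated:
  assumes "noetherian_ring TYPE('a::comm_ring_1)"
  shows "submodule m (L :: (nat \<Rightarrow> 'a) set) \<Longrightarrow>
    \<exists>(p::nat) g. (\<forall>j<p. g j \<in> L) \<and> (\<forall>y\<in>L. \<exists>c. y = (\<lambda>i. \<Sum>j<p. c j * g j i))"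
proof (induction m arbitrary: L)
  case 0
  then have "\<forall>y\<in>L. y = (\<lambda>i. 0)"
    using submodule_vanishes[OF 0] by auto
  then show ?case
    by (intro exI[of _ 0]) auto
next
  case (Suc m)
  let ?I = "(\<lambda>y. y m) ` L"
  obtain p :: nat and g where g: "\<forall>j<p. g j \<in> {y \<in> L. y m = 0}"
    and g_span: "\<forall>y\<in>{y \<in> L. y m = 0}. \<exists>c. y = (\<lambda>i. \<Sum>j<p. c j * g j i)"
    using Suc.IH[OF submodule_coordinate_kernel[OF Suc.prems]] by blast
  obtain q :: nat and h where h: "\<forall>j<q. h j \<in> ?I" and h_span: "\<forall>t\<in>?I. \<exists>e. t = (\<Sum>j<q. e j * h j)"
    by (rule noetherian_ideal_generators[OF assms submodule_coordinate_ideal[OF Suc.prems]])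
  have "\<forall>j<q. \<exists>y\<in>L. y m = h j"
    using h by (metis imageE)
  then obtain l where l: "\<forall>j<q. l j \<in> L \<and> l j m = h j"
    by metis
  define G where "G = (\<lambda>j. if j < p then g j else l (j - p))"
  have "\<exists>C. y = (\<lambda>i. \<Sum>j<p + q. C j * G j i)" if y: "y \<in> L" for y
  proof -
    obtain e where y_m: "y m = (\<Sum>j<q. e j * h j)"
      using y h_span by blast
    define w where "w = (\<lambda>i. \<Sum>j<q. e j * l j i)"
    have "w \<in> L"
      unfolding w_def by (rule submodule_lincomb[OF Suc.prems]) (use l in blast)
    moreover have "w m = y m"
      unfolding w_def y_m using l by (intro sum.cong) auto
    ultimately have "(\<lambda>i. y i - w i) \<in> {y \<in> L. y m = 0}"
      using submodule_diff[OF Suc.prems y] by simp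
    then obtain d where d: "(\<lambda>i. y i - w i) = (\<lambda>i. \<Sum>j<p. d j * g j i)"
      using g_span by blast
    define C where "C = (\<lambda>j. if j < p then d j else e (j - p))"
    have "y i = (\<Sum>j<p + q. C j * G j i)" for i
    proof -
      have "y i = (\<Sum>j<p. d j * g j i) + w i"
        using fun_cong[OF d, of i] by (simp add: algebra_simps)
      also have "\<dots> = (\<Sum>j<p + q. C j * G j i)"
        unfolding sum_lessThan_add w_def C_def G_def by simp
      finally show ?thesis .
    qed
    then show ?thesis by blast
  qed
  moreover have "\<forall>j<p + q. G j \<in> L"
    unfolding G_def using g l by auto
  ultimately show ?case
    by (intro exI[of _ "p + q"] exI[of _ G]) blast
qed

lemma linear_on_factors_through_coordinate:
  fixes L :: "(nat \<Rightarrow> 'a::comm_ring_1) set"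
  assumes "self_injective TYPE('a)" "submodule n L" "linear_on L g"
    and kernel: "\<forall>y\<in>L. y m = 0 \<longrightarrow> g y = 0"
  shows "\<exists>c. \<forall>y\<in>L. g y = c * y m"
proof -
  let ?I = "(\<lambda>y. y m) ` L"
  have g_eq: "g x = g y" if "x \<in> L" "y \<in> L" "x m = y m" for x y
    using linear_on_diff[OF assms(2,3) that(1,2)] kernel submodule_diff[OF assms(2) that(1,2)] that(3)
    by simp
  define \<theta> where "\<theta> t = g (SOME y. y \<in> L \<and> y m = t)" for t
  have \<theta>: "\<theta> (y m) = g y" if "y \<in> L" for y
  proof -
    have "(SOME x. x \<in> L \<and> x m = y m) \<in> L \<and> (SOME x. x \<in> L \<and> x m = y m) m = y m"
      by (rule someI[of _ y]) (use that in simp)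
    then show ?thesis
      unfolding \<theta>_def using g_eq that by blast
  qed
  have "\<forall>s\<in>?I. \<forall>t\<in>?I. \<theta> (s + t) = \<theta> s + \<theta> t"
  proof (intro ballI)
    fix s t assume "s \<in> ?I" "t \<in> ?I"
    then obtain x y where "x \<in> L" "y \<in> L" "s = x m" "t = y m" by blast
    then show "\<theta> (s + t) = \<theta> s + \<theta> t"
      using \<theta>[OF submodule_add[OF assms(2)]] linear_on_add[OF assms(3)] \<theta> by simp
  qed
  moreover have "\<forall>r. \<forall>t\<in>?I. \<theta> (r * t) = r * \<theta> t"
  proof (intro allI ballI)
    fix r t assume "t \<in> ?I"
    then obtain y where "y \<in> L" "t = y m" by blast
    then show "\<theta> (r * t) = r * \<theta> t"
      using \<theta>[OF submodule_smult[OF assms(2)]] linear_on_smult[OF assms(3)] \<theta> by simp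
  qed
  ultimately obtain c where "\<forall>t\<in>?I. \<theta> t = c * t"
    using assms(1) submodule_coordinate_ideal[OF assms(2)] unfolding self_injective_def by blast
  then show ?thesis
    using \<theta> by auto
qed

lemma linear_on_extends:
  fixes L :: "(nat \<Rightarrow> 'a::comm_ring_1) set"
  assumes "self_injective TYPE('a)"
  shows "submodule m L \<Longrightarrow> linear_on L \<phi> \<Longrightarrow> \<exists>a. \<forall>y\<in>L. \<phi> y = (\<Sum>i<m. a i * y i)"
proof (induction m arbitrary: L \<phi>)
  case 0
  then have "\<forall>y\<in>L. y = (\<lambda>i. 0)"
    using submodule_vanishes[OF 0(1)] by auto
  then show ?case
    using linear_on_zero[OF 0] by auto
next
  case (Suc m)
  let ?L' = "{y \<in> L. y m = 0}"
  have "linear_on ?L' \<phi>"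
    by (rule linear_on_subset[OF Suc.prems(2)]) blast
  then obtain a where a: "\<forall>y\<in>?L'. \<phi> y = (\<Sum>i<m. a i * y i)"
    using Suc.IH[OF submodule_coordinate_kernel[OF Suc.prems(1)]] by blast
  have "\<forall>y\<in>L. y m = 0 \<longrightarrow> \<phi> y - (\<Sum>i<m. a i * y i) = 0"
    using a by simp
  then obtain c where c: "\<forall>y\<in>L. \<phi> y - (\<Sum>i<m. a i * y i) = c * y m"
    using linear_on_factors_through_coordinate[OF assms Suc.prems(1)
        linear_on_minus_dot[OF Suc.prems(2)]] by blast
  have "\<phi> y = (\<Sum>i<Suc m. (a(m := c)) i * y i)" if "y \<in> L" for y
  proof -
    have "\<phi> y = (\<Sum>i<m. a i * y i) + c * y m"
      using c that by (simp add: algebra_simps)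
    then show ?thesis by simp
  qed
  then show ?case by blast
qed

lemma submodule_range:
  fixes W :: "(nat \<Rightarrow> 'a::comm_ring_1) \<Rightarrow> nat \<Rightarrow> 'a"
  assumes "\<And>k. W k \<in> freemod p"
    and W_add: "\<And>k k'. W (\<lambda>i. k i + k' i) = (\<lambda>j. W k j + W k' j)"
    and W_smult: "\<And>r k. W (\<lambda>i. r * k i) = (\<lambda>j. r * W k j)"
  shows "submodule p (range W)"
  unfolding submodule_def
proof (intro conjI ballI allI)
  show "range W \<subseteq> freemod p"
    using assms(1) by blast
  have "(\<lambda>j. 0) = W (\<lambda>i. 0 * 0)"
    using W_smult[of 0 "\<lambda>i. 0"] by simp
  then show "(\<lambda>j. 0) \<in> range W"
    by simp
next
  fix x y assume "x \<in> range W" "y \<in> range W"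
  then obtain k k' where "x = W k" "y = W k'" by blast
  then have "(\<lambda>j. x j + y j) = W (\<lambda>i. k i + k' i)"
    using W_add by simp
  then show "(\<lambda>j. x j + y j) \<in> range W"
    by simp
next
  fix r x assume "x \<in> range W"
  then obtain k where "x = W k" by blast
  then have "(\<lambda>j. r * x j) = W (\<lambda>i. r * k i)"
    using W_smult by simp
  then show "(\<lambda>j. r * x j) \<in> range W"
    by simp
qed

lemma linear_on_range_factor:
  fixes W :: "(nat \<Rightarrow> 'a::comm_ring_1) \<Rightarrow> nat \<Rightarrow> 'a" and h :: "(nat \<Rightarrow> 'a) \<Rightarrow> 'a"
  assumes W_add: "\<And>k k'. W (\<lambda>i. k i + k' i) = (\<lambda>j. W k j + W k' j)"
    and W_smult: "\<And>r k. W (\<lambda>i. r * k i) = (\<lambda>j. r * W k j)"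
    and h_add: "\<And>k k'. h (\<lambda>i. k i + k' i) = h k + h k'"
    and h_smult: "\<And>r k. h (\<lambda>i. r * k i) = r * h k"
    and h_factors: "\<And>k k'. W k = W k' \<Longrightarrow> h k = h k'"
  obtains \<phi> where "linear_on (range W) \<phi>" and "\<And>k. \<phi> (W k) = h k"
proof
  define \<phi> where "\<phi> w = h (SOME k. w = W k)" for w
  show \<phi>: "\<phi> (W k) = h k" for k
  proof -
    have "W k = W (SOME k'. W k = W k')"
      by (rule someI[of _ k]) (rule refl)
    then show ?thesis
      unfolding \<phi>_def by (rule h_factors[symmetric])
  qed
  show "linear_on (range W) \<phi>"
    unfolding linear_on_def
  proof (intro conjI ballI allI)
    fix x y assume "x \<in> range W" "y \<in> range W"
    then obtain k k' where "x = W k" "y = W k'" by blast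
    then have "(\<lambda>j. x j + y j) = W (\<lambda>i. k i + k' i)"
      using W_add by simp
    then show "\<phi> (\<lambda>j. x j + y j) = \<phi> x + \<phi> y"
      using \<open>x = W k\<close> \<open>y = W k'\<close> \<phi> h_add by simp
  next
    fix r x assume "x \<in> range W"
    then obtain k where "x = W k" by blast
    then have "(\<lambda>j. r * x j) = W (\<lambda>i. r * k i)"
      using W_smult by simp
    then show "\<phi> (\<lambda>j. r * x j) = r * \<phi> x"
      using \<open>x = W k\<close> \<phi> h_smult by simp
  qed
qed

lemma orthogonal_span:
  fixes k :: "nat \<Rightarrow> 'a::comm_ring_1" and p :: nat
  assumes "\<forall>y\<in>N. \<exists>c. y = (\<lambda>i. \<Sum>j<p. c j * g j i)" "\<forall>j<p. (\<Sum>i<n. k i * g j i) = 0"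
  shows "\<forall>y\<in>N. (\<Sum>i<n. k i * y i) = 0"
proof
  fix y assume "y \<in> N"
  then obtain c where y: "y = (\<lambda>i. \<Sum>j<p. c j * g j i)"
    using assms(1) by blast
  have "(\<Sum>i<n. k i * y i) = (\<Sum>j<p. c j * (\<Sum>i<n. k i * g j i))"
    unfolding y by (rule dot_lincomb)
  also have "\<dots> = 0"
    using assms(2) by simp
  finally show "(\<Sum>i<n. k i * y i) = 0" .
qed

lemma submodule_double_orthogonal:
  fixes N :: "(nat \<Rightarrow> 'a::comm_ring_1) set"
  assumes inj: "self_injective TYPE('a)" and noeth: "noetherian_ring TYPE('a)"
    and N: "submodule n N" and z: "z \<in> freemod n"
    and orth: "\<And>k. \<forall>y\<in>N. (\<Sum>i<n. k i * y i) = 0 \<Longrightarrow> (\<Sum>i<n. k i * z i) = 0"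
  shows "z \<in> N"
proof -
  obtain p :: nat and g where g: "\<forall>j<p. g j \<in> N"
    and g_span: "\<forall>y\<in>N. \<exists>c. y = (\<lambda>i. \<Sum>j<p. c j * g j i)"
    using submodule_finitely_generated[OF noeth N] by blast
  \<comment> \<open>k \<mapsto> k \<cdot> z factors through W, the pairing of k with the generators of N\<close>
  define W where "W k j = (if j < p then \<Sum>i<n. k i * g j i else 0)" for k j
  have W_add: "W (\<lambda>i. k i + k' i) = (\<lambda>j. W k j + W k' j)" for k k'
    by (simp add: W_def fun_eq_iff distrib_right sum.distrib)
  have W_smult: "W (\<lambda>i. r * k i) = (\<lambda>j. r * W k j)" for r k
    by (simp add: W_def fun_eq_iff sum_distrib_left mult.assoc)
  have "submodule p (range W)"
    using W_add W_smult by (intro submodule_range) (auto simp: W_def freemod_def)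
  have z_factors: "(\<Sum>i<n. k i * z i) = (\<Sum>i<n. k' i * z i)" if "W k = W k'" for k k'
  proof -
    have "\<forall>j<p. (\<Sum>i<n. (k i - k' i) * g j i) = 0"
    proof (intro allI impI)
      fix j assume "j < p"
      then have "(\<Sum>i<n. k i * g j i) = (\<Sum>i<n. k' i * g j i)"
        using fun_cong[OF \<open>W k = W k'\<close>, of j] by (simp add: W_def)
      then show "(\<Sum>i<n. (k i - k' i) * g j i) = 0"
        by (simp add: left_diff_distrib sum_subtractf)
    qed
    then have "(\<Sum>i<n. (k i - k' i) * z i) = 0"
      by (rule orth[OF orthogonal_span[OF g_span]])
    then show ?thesis
      by (simp add: left_diff_distrib sum_subtractf)
  qed
  obtain \<phi> where "linear_on (range W) \<phi>" and \<phi>: "\<And>k. \<phi> (W k) = (\<Sum>i<n. k i * z i)"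
    using linear_on_range_factor[of W "\<lambda>k. \<Sum>i<n. k i * z i", OF W_add W_smult _ _ z_factors]
    by (simp add: distrib_right sum.distrib sum_distrib_left mult.assoc) blast
  then obtain b where b: "\<forall>w\<in>range W. \<phi> w = (\<Sum>j<p. b j * w j)"
    using linear_on_extends[OF inj \<open>submodule p (range W)\<close>] by blast
  have "z i = (\<Sum>j<p. b j * g j i)" for i
  proof (cases "i < n")
    case True
    define \<delta> where "\<delta> l = (if l = i then 1 else 0 :: 'a)" for l
    have "z i = \<phi> (W \<delta>)"
      unfolding \<phi> \<delta>_def by (rule sum_lessThan_delta[OF True, symmetric])
    also have "\<dots> = (\<Sum>j<p. b j * W \<delta> j)"
      using b by blast
    also have "\<dots> = (\<Sum>j<p. b j * g j i)"
    proof (intro sum.cong refl)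
      fix j assume "j \<in> {..<p}"
      then have "W \<delta> j = g j i"
        unfolding W_def \<delta>_def using sum_lessThan_delta[OF True] by simp
      then show "b j * W \<delta> j = b j * g j i" by simp
    qed
    finally show ?thesis .
  next
    case False
    then have "g j i = 0" if "j < p" for j
      using submodule_vanishes[OF N] g that by simp
    then show ?thesis
      using z False by (simp add: freemod_def)
  qed
  then have "z = (\<lambda>i. \<Sum>j<p. b j * g j i)" ..
  then show ?thesis
    using submodule_lincomb[OF N g] by simp
qed

section \<open>Determinants of nat-indexed matrices\<close>

definition det_fun :: "nat \<Rightarrow> (nat \<Rightarrow> nat \<Rightarrow> 'a::comm_ring_1) \<Rightarrow> 'a" where
  "det_fun n A = (\<Sum>p | p permutes {..<n}. of_int (sign p) * (\<Prod>i<n. A i (p i)))"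

lemma det_fun_row_expansion:
  assumes "k < n"
  shows "det_fun n (A(k := w)) =
    (\<Sum>p | p permutes {..<n}. of_int (sign p) * (w (p k) * (\<Prod>i\<in>{..<n} - {k}. A i (p i))))"
  unfolding det_fun_def
proof (intro sum.cong refl)
  fix p
  have "(\<Prod>i<n. (A(k := w)) i (p i)) = w (p k) * (\<Prod>i\<in>{..<n} - {k}. (A(k := w)) i (p i))"
    using assms by (subst prod.remove[of _ k]) auto
  also have "(\<Prod>i\<in>{..<n} - {k}. (A(k := w)) i (p i)) = (\<Prod>i\<in>{..<n} - {k}. A i (p i))"
    by (rule prod.cong) auto
  finally show "of_int (sign p) * (\<Prod>i<n. (A(k := w)) i (p i)) =
      of_int (sign p) * (w (p k) * (\<Prod>i\<in>{..<n} - {k}. A i (p i)))"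
    by simp
qed

lemma det_fun_add_row:
  "k < n \<Longrightarrow> det_fun n (A(k := (\<lambda>j. u j + v j))) = det_fun n (A(k := u)) + det_fun n (A(k := v))"
  unfolding det_fun_row_expansion by (simp add: sum.distrib[symmetric] algebra_simps)

lemma det_fun_smult_row:
  "k < n \<Longrightarrow> det_fun n (A(k := (\<lambda>j. r * u j))) = r * det_fun n (A(k := u))"
  unfolding det_fun_row_expansion by (simp add: sum_distrib_left ac_simps)

lemma evenperm_comp_transpose:
  fixes n :: nat
  assumes "p permutes {..<n}" "i < n" "j < n" "i \<noteq> j"
  shows "evenperm (p \<circ> Transposition.transpose i j) \<longleftrightarrow> \<not> evenperm p"
proof -
  have "permutation p"
    by (rule permutes_imp_permutation[OF _ assms(1)]) simp
  then have "evenperm (p \<circ> Transposition.transpose i j) \<longleftrightarrow>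
      evenperm p = evenperm (Transposition.transpose i j)"
    using permutation_swap_id by (rule evenperm_comp)
  then show ?thesis
    using evenperm_swap[of i j] assms(4) by simp
qed

lemma det_fun_identical_rows:
  fixes A :: "nat \<Rightarrow> nat \<Rightarrow> 'a::comm_ring_1"
  assumes ij: "i < n" "j < n" "i \<noteq> j" and "A i = A j"
  shows "det_fun n A = 0"
proof -
  let ?t = "Transposition.transpose i j"
  let ?E = "{p. p permutes {..<n} \<and> evenperm p}"
  let ?O = "{p. p permutes {..<n} \<and> \<not> evenperm p}"
  define F where "F p = of_int (sign p) * (\<Prod>l<n. A l (p l))" for p
  have t: "?t permutes {..<n}"
    using ij by (intro permutes_swap_id) auto
  have "F (p \<circ> ?t) = - F p" if p: "p permutes {..<n}" for p
  proof -
    have "permutation p"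
      by (rule permutes_imp_permutation[OF _ p]) simp
    then have "sign (p \<circ> ?t) = sign p * sign ?t"
      using permutation_swap_id by (rule sign_compose)
    then have "sign (p \<circ> ?t) = - sign p"
      using sign_swap_id[of i j] ij(3) by simp
    moreover have "(\<Prod>l<n. A l ((p \<circ> ?t) l)) = (\<Prod>l<n. A (?t l) (p l))"
      using prod.permute[OF t, of "\<lambda>l. A l ((p \<circ> ?t) l)"] by (simp add: comp_def)
    moreover have "A (?t l) = A l" for l
      using \<open>A i = A j\<close> by (cases "l = i"; cases "l = j") auto
    ultimately show ?thesis
      unfolding F_def by simp
  qed
  moreover have "bij_betw (\<lambda>p. p \<circ> ?t) ?E ?O"
    by (rule bij_betw_byWitness[where f' = "\<lambda>p. p \<circ> ?t"])
      (auto simp: comp_assoc evenperm_comp_transpose[OF _ ij] permutes_compose[OF t])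
  ultimately have "sum F ?O = - sum F ?E"
    using sum.reindex_bij_betw[of "\<lambda>p. p \<circ> ?t" ?E ?O F] by (simp add: sum_negf)
  moreover have "det_fun n A = sum F ?E + sum F ?O"
    unfolding det_fun_def F_def
    by (subst sum.union_disjoint[symmetric]) (auto intro: sum.cong finite_permutations)
  ultimately show ?thesis by simp
qed

lemma det_fun_id: "det_fun n (\<lambda>i j. if i = j then 1 else 0) = 1"
proof -
  have "(\<Prod>i<n. if i = p i then 1 else 0) = (0::'a)" if "p permutes {..<n}" "p \<noteq> id" for p
  proof -
    have "\<exists>l<n. p l \<noteq> l"
    proof (rule ccontr)
      assume "\<not> (\<exists>l<n. p l \<noteq> l)"
      then have "p l = l" for l
        using permutes_not_in[OF that(1), of l] by (cases "l < n") auto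
      then show False
        using that(2) by (simp add: fun_eq_iff)
    qed
    then obtain l where "l < n" "p l \<noteq> l" by blast
    then show ?thesis
      by (intro prod_zero) (auto intro!: bexI[of _ l])
  qed
  then have "det_fun n (\<lambda>i j. if i = j then 1 else (0::'a)) = of_int (sign id) * (\<Prod>i<n. 1)"
    unfolding det_fun_def
    by (subst sum.remove[of _ id]) (auto simp: permutes_id finite_permutations intro: sum.neutral)
  then show ?thesis by simp
qed

lemma mult_prod_cong:
  fixes c :: "'a::comm_ring_1"
  assumes "finite S" "\<forall>i\<in>S. c * x i = c * y i"
  shows "c * prod x S = c * prod y S"
  using assms
proof (induction S rule: finite_induct)
  case (insert a S)
  then have IH: "c * prod x S = c * prod y S" by simp
  have "c * prod x (insert a S) = x a * (c * prod x S)"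
    using insert.hyps by (simp add: ac_simps)
  also have "\<dots> = (c * x a) * prod y S"
    by (simp add: IH ac_simps)
  also have "\<dots> = (c * y a) * prod y S"
    using insert.prems by simp
  also have "\<dots> = c * prod y (insert a S)"
    using insert.hyps by (simp add: ac_simps)
  finally show ?case .
qed simp

lemma mult_det_fun_cong:
  fixes c :: "'a::comm_ring_1"
  assumes "\<forall>i<n. \<forall>j<n. c * A i j = c * B i j"
  shows "c * det_fun n A = c * det_fun n B"
proof -
  have "c * (\<Prod>i<n. A i (p i)) = c * (\<Prod>i<n. B i (p i))" if "p permutes {..<n}" for p
    using assms permutes_in_image[OF that] by (intro mult_prod_cong) auto
  then show ?thesis
    unfolding det_fun_def sum_distrib_left by (intro sum.cong refl) (simp add: mult.left_commute[of c])
qed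

lemma mult_det_fun_row_cong:
  fixes c :: "'a::comm_ring_1"
  assumes "\<forall>j<n. c * u j = c * v j"
  shows "c * det_fun n (A(k := u)) = c * det_fun n (A(k := v))"
  using assms by (intro mult_det_fun_cong) auto

section \<open>Alternating forms on the dual of a submodule\<close>

lemma dual_zero: "(\<lambda>x. 0) \<in> dual N"
  unfolding dual_def by auto

lemma dual_add: "\<phi> \<in> dual N \<Longrightarrow> \<psi> \<in> dual N \<Longrightarrow> (\<lambda>x. \<phi> x + \<psi> x) \<in> dual N"
  unfolding dual_def by (auto simp: algebra_simps)

lemma dual_smult: "\<phi> \<in> dual N \<Longrightarrow> (\<lambda>x. r * \<phi> x) \<in> dual N"
  unfolding dual_def by (auto simp: distrib_left mult.left_commute)

lemma dual_lincomb:
  "finite S \<Longrightarrow> \<forall>i\<in>S. g i \<in> dual N \<Longrightarrow> (\<lambda>x. \<Sum>i\<in>S. r i * g i x) \<in> dual N"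
proof (induction S rule: finite_induct)
  case (insert a S)
  have "(\<lambda>x. r a * g a x) \<in> dual N"
    using insert.prems by (simp add: dual_smult)
  from dual_add[OF this insert.IH] insert.prems
  have "(\<lambda>x. r a * g a x + (\<Sum>i\<in>S. r i * g i x)) \<in> dual N"
    by simp
  then show ?case
    using insert.hyps by simp
qed (simp add: dual_zero)

lemma dual_imp_linear_on: "\<phi> \<in> dual N \<Longrightarrow> linear_on N \<phi>"
  unfolding dual_def linear_on_def by blast

lemma restricted_coordinate_in_dual:
  assumes "submodule n N"
  shows "(\<lambda>x. if x \<in> N then x i else 0) \<in> dual N"
  unfolding dual_def using submodule_add[OF assms] submodule_smult[OF assms] by auto

lemma alt_form_add:
  "alt_form n D \<Phi> \<Longrightarrow> \<forall>i<n. f i \<in> D \<Longrightarrow> k < n \<Longrightarrow> \<phi> \<in> D \<Longrightarrow> \<psi> \<in> D \<Longrightarrow>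
    \<Phi> (f(k := (\<lambda>x. \<phi> x + \<psi> x))) = \<Phi> (f(k := \<phi>)) + \<Phi> (f(k := \<psi>))"
  unfolding alt_form_def by blast

lemma alt_form_smult:
  "alt_form n D \<Phi> \<Longrightarrow> \<forall>i<n. f i \<in> D \<Longrightarrow> k < n \<Longrightarrow> \<phi> \<in> D \<Longrightarrow>
    \<Phi> (f(k := (\<lambda>x. r * \<phi> x))) = r * \<Phi> (f(k := \<phi>))"
  unfolding alt_form_def by blast

lemma alt_form_eq_args:
  "alt_form n D \<Phi> \<Longrightarrow> \<forall>l<n. f l \<in> D \<Longrightarrow> i < n \<Longrightarrow> j < n \<Longrightarrow> i \<noteq> j \<Longrightarrow> f i = f j \<Longrightarrow> \<Phi> f = 0"
  unfolding alt_form_def by blast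

lemma alt_form_lincomb:
  assumes "alt_form n (dual N) \<Phi>" "\<forall>l<n. f l \<in> dual N" "k < n"
  shows "finite S \<Longrightarrow> \<forall>i\<in>S. g i \<in> dual N \<Longrightarrow>
    \<Phi> (f(k := (\<lambda>x. \<Sum>i\<in>S. r i * g i x))) = (\<Sum>i\<in>S. r i * \<Phi> (f(k := g i)))"
proof (induction S rule: finite_induct)
  case empty
  have zero: "(\<lambda>x. \<Sum>i\<in>{}. r i * g i x) = (\<lambda>x. 0 * f k x)"
    by simp
  have scale_zero: "\<Phi> (f(k := (\<lambda>x. 0 * f k x))) = 0 * \<Phi> (f(k := f k))"
    using alt_form_smult[OF assms] assms(2,3) by blast
  show ?case
    unfolding zero scale_zero by simp
next
  case (insert a S)
  have "\<Phi> (f(k := (\<lambda>x. \<Sum>i\<in>insert a S. r i * g i x))) =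
      \<Phi> (f(k := (\<lambda>x. r a * g a x + (\<Sum>i\<in>S. r i * g i x))))"
    using insert.hyps by simp
  also have "\<dots> = \<Phi> (f(k := (\<lambda>x. r a * g a x))) + \<Phi> (f(k := (\<lambda>x. \<Sum>i\<in>S. r i * g i x)))"
    using insert by (intro alt_form_add[OF assms] dual_smult dual_lincomb) auto
  also have "\<dots> = r a * \<Phi> (f(k := g a)) + (\<Sum>i\<in>S. r i * \<Phi> (f(k := g i)))"
    using insert alt_form_smult[OF assms] by (simp add: fun_upd_def)
  also have "\<dots> = (\<Sum>i\<in>insert a S. r i * \<Phi> (f(k := g i)))"
    using insert.hyps by simp
  finally show ?case .
qed

section \<open>The characteristic ideal\<close>

lemma char_ideal_annihilates_orthogonal:
  fixes N :: "(nat \<Rightarrow> 'a::comm_ring_1) set"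
  assumes N: "submodule n N" and \<Phi>: "alt_form n (dual N) \<Phi>"
    and k: "\<forall>y\<in>N. (\<Sum>i<n. k i * y i) = 0" and j: "j < n"
  shows "k j * \<Phi> (\<lambda>i x. if x \<in> N then x i else 0) = 0"
proof -
  define E where "E i x = (if x \<in> N then x i else 0)" for i x
  let ?S = "{..<n} - {j}"
  have E: "\<forall>l<n. E l \<in> dual N"
    unfolding E_def using restricted_coordinate_in_dual[OF N] by blast
  have comb: "(\<lambda>x. k j * E j x) = (\<lambda>x. \<Sum>i\<in>?S. (- k i) * E i x)"
  proof
    fix x
    show "k j * E j x = (\<Sum>i\<in>?S. (- k i) * E i x)"
    proof (cases "x \<in> N")
      case True
      have "0 = (\<Sum>i<n. k i * x i)"
        using k True by simp
      also have "\<dots> = k j * x j + (\<Sum>i\<in>?S. k i * x i)"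
        using j by (intro sum.remove) auto
      finally show ?thesis
        using True by (simp add: E_def sum_negf eq_neg_iff_add_eq_0 add.commute)
    qed (simp add: E_def)
  qed
  have "k j * \<Phi> E = \<Phi> (E(j := (\<lambda>x. k j * E j x)))"
    using alt_form_smult[OF \<Phi> E j, of "E j" "k j"] E j by simp
  also have "\<dots> = \<Phi> (E(j := (\<lambda>x. \<Sum>i\<in>?S. (- k i) * E i x)))"
    by (simp only: comb)
  also have "\<dots> = (\<Sum>i\<in>?S. (- k i) * \<Phi> (E(j := E i)))"
    by (rule alt_form_lincomb[OF \<Phi> E j]) (use E in auto)
  also have "\<dots> = 0"
    using alt_form_eq_args[OF \<Phi>, of "E(j := E i)" i j for i] E j by (intro sum.neutral) auto
  finally show ?thesis
    unfolding E_def[abs_def] by simp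
qed

lemma char_ideal_mult_mem:
  fixes N :: "(nat \<Rightarrow> 'a::comm_ring_1) set"
  assumes "self_injective TYPE('a)" "noetherian_ring TYPE('a)" "submodule n N"
    and "c \<in> char_ideal n N" "x \<in> freemod n"
  shows "(\<lambda>i. c * x i) \<in> N"
proof (rule submodule_double_orthogonal[OF assms(1-3)])
  show "(\<lambda>i. c * x i) \<in> freemod n"
    using assms(5) unfolding freemod_def by simp
next
  fix k assume k: "\<forall>y\<in>N. (\<Sum>i<n. k i * y i) = 0"
  obtain \<Phi> where "alt_form n (dual N) \<Phi>" "c = \<Phi> (\<lambda>i x. if x \<in> N then x i else 0)"
    using assms(4) unfolding char_ideal_def by blast
  then have "k i * c = 0" if "i < n" for i
    using char_ideal_annihilates_orthogonal[OF assms(3) _ k that] by simp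
  then show "(\<Sum>i<n. k i * (c * x i)) = 0"
    by (simp add: mult.assoc[symmetric])
qed

definition dual_coeffs :: "nat \<Rightarrow> (nat \<Rightarrow> 'a::comm_ring_1) set \<Rightarrow> ((nat \<Rightarrow> 'a) \<Rightarrow> 'a) \<Rightarrow> nat \<Rightarrow> 'a" where
  "dual_coeffs n N \<psi> = (SOME a. \<forall>y\<in>N. \<psi> y = (\<Sum>i<n. a i * y i))"

lemma dual_coeffs:
  fixes N :: "(nat \<Rightarrow> 'a::comm_ring_1) set"
  assumes "self_injective TYPE('a)" "submodule n N" "\<psi> \<in> dual N" "y \<in> N"
  shows "\<psi> y = (\<Sum>i<n. dual_coeffs n N \<psi> i * y i)"
proof -
  have "\<exists>a. \<forall>y\<in>N. \<psi> y = (\<Sum>i<n. a i * y i)"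
    using linear_on_extends[OF assms(1,2) dual_imp_linear_on[OF assms(3)]] .
  then have "\<forall>y\<in>N. \<psi> y = (\<Sum>i<n. dual_coeffs n N \<psi> i * y i)"
    unfolding dual_coeffs_def by (rule someI_ex)
  then show ?thesis
    using assms(4) by (rule bspec)
qed

text \<open>Coefficient vectors of a functional on N are not unique; once c R^n \<subseteq> N,
  c times them is.\<close>
lemma mult_dual_coeffs:
  fixes N :: "(nat \<Rightarrow> 'a::comm_ring_1) set"
  assumes "self_injective TYPE('a)" "submodule n N" "\<psi> \<in> dual N" "j < n"
    and "(\<lambda>i. if i = j then c else 0) \<in> N"
  shows "c * dual_coeffs n N \<psi> j = \<psi> (\<lambda>i. if i = j then c else 0)"
proof -
  have "\<psi> (\<lambda>i. if i = j then c else 0) = (\<Sum>i<n. (if i = j then 1 else 0) * (c * dual_coeffs n N \<psi> i))"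
    unfolding dual_coeffs[OF assms(1-3,5)] by (intro sum.cong refl) simp
  also have "\<dots> = c * dual_coeffs n N \<psi> j"
    by (rule sum_lessThan_delta[OF assms(4)])
  finally show ?thesis ..
qed

lemma alt_form_det_dual_coeffs:
  fixes N :: "(nat \<Rightarrow> 'a::comm_ring_1) set"
  assumes inj: "self_injective TYPE('a)" and N: "submodule n N"
    and c: "\<forall>j<n. (\<lambda>i. if i = j then c else 0) \<in> N"
  shows "alt_form n (dual N) (\<lambda>F. c * det_fun n (dual_coeffs n N \<circ> F))"
proof -
  let ?a = "dual_coeffs n N"
  have coeffs: "c * ?a \<psi> j = \<psi> (\<lambda>i. if i = j then c else 0)" if "\<psi> \<in> dual N" "j < n" for \<psi> j
    using mult_dual_coeffs[OF inj N that] c that(2) by simp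
  show ?thesis
    unfolding alt_form_def
  proof (intro conjI allI impI)
    fix F k \<phi> \<psi>
    assume "(\<forall>i<n. F i \<in> dual N) \<and> k < n \<and> \<phi> \<in> dual N \<and> \<psi> \<in> dual N"
    then have k: "k < n" and \<phi>: "\<phi> \<in> dual N" and \<psi>: "\<psi> \<in> dual N" by auto
    have "c * det_fun n (?a \<circ> F(k := (\<lambda>x. \<phi> x + \<psi> x))) =
        c * det_fun n ((?a \<circ> F)(k := (\<lambda>j. ?a \<phi> j + ?a \<psi> j)))"
      unfolding fun_upd_comp
      by (rule mult_det_fun_row_cong) (simp add: distrib_left coeffs dual_add \<phi> \<psi>)
    also have "\<dots> = c * det_fun n (?a \<circ> F(k := \<phi>)) + c * det_fun n (?a \<circ> F(k := \<psi>))"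
      unfolding fun_upd_comp det_fun_add_row[OF k] by (simp add: distrib_left)
    finally show "c * det_fun n (?a \<circ> F(k := (\<lambda>x. \<phi> x + \<psi> x))) =
        c * det_fun n (?a \<circ> F(k := \<phi>)) + c * det_fun n (?a \<circ> F(k := \<psi>))" .
  next
    fix F k r \<phi>
    assume "(\<forall>i<n. F i \<in> dual N) \<and> k < n \<and> \<phi> \<in> dual N"
    then have k: "k < n" and \<phi>: "\<phi> \<in> dual N" by auto
    have "c * det_fun n (?a \<circ> F(k := (\<lambda>x. r * \<phi> x))) =
        c * det_fun n ((?a \<circ> F)(k := (\<lambda>j. r * ?a \<phi> j)))"
      unfolding fun_upd_comp
      by (rule mult_det_fun_row_cong) (simp add: mult.left_commute[of c] coeffs dual_smult \<phi>)
    also have "\<dots> = r * (c * det_fun n (?a \<circ> F(k := \<phi>)))"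
      unfolding fun_upd_comp det_fun_smult_row[OF k] by (simp add: mult.left_commute)
    finally show "c * det_fun n (?a \<circ> F(k := (\<lambda>x. r * \<phi> x))) =
        r * (c * det_fun n (?a \<circ> F(k := \<phi>)))" .
  next
    fix F i j
    assume "(\<forall>l<n. F l \<in> dual N) \<and> i < n \<and> j < n \<and> i \<noteq> j \<and> F i = F j"
    then show "c * det_fun n (?a \<circ> F) = 0"
      using det_fun_identical_rows[of i n j "?a \<circ> F"] by simp
  qed
qed

lemma char_ideal_memI:
  fixes N :: "(nat \<Rightarrow> 'a::comm_ring_1) set"
  assumes inj: "self_injective TYPE('a)" and N: "submodule n N"
    and c: "\<forall>j<n. (\<lambda>i. if i = j then c else 0) \<in> N"
  shows "c \<in> char_ideal n N"
proof -
  define E where "E = (\<lambda>i x. if x \<in> N then x i else 0)"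
  have "c * dual_coeffs n N (E i) j = c * (if i = j then 1 else 0)" if "i < n" "j < n" for i j
    using mult_dual_coeffs[OF inj N restricted_coordinate_in_dual[OF N]] c that
    unfolding E_def by simp
  then have "c * det_fun n (dual_coeffs n N \<circ> E) = c * det_fun n (\<lambda>i j. if i = j then 1 else 0)"
    by (intro mult_det_fun_cong) simp
  then have "c * det_fun n (dual_coeffs n N \<circ> E) = c"
    by (simp add: det_fun_id)
  then show ?thesis
    using alt_form_det_dual_coeffs[OF inj N c] unfolding char_ideal_def E_def
    by (auto intro!: exI[of _ "\<lambda>F. c * det_fun n (dual_coeffs n N \<circ> F)"])
qed

theorem char_ideal_eq_colon:
  fixes N :: "(nat \<Rightarrow> 'a::comm_ring_1) set"
  assumes "self_injective TYPE('a)" "noetherian_ring TYPE('a)" "submodule n N"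
  shows "char_ideal n N = {c. \<forall>x\<in>freemod n. (\<lambda>i. c * x i) \<in> N}"
proof (intro set_eqI iffI)
  fix c assume "c \<in> char_ideal n N"
  then show "c \<in> {c. \<forall>x\<in>freemod n. (\<lambda>i. c * x i) \<in> N}"
    using char_ideal_mult_mem[OF assms] by blast
next
  fix c assume "c \<in> {c. \<forall>x\<in>freemod n. (\<lambda>i. c * x i) \<in> N}"
  then have c: "\<forall>x\<in>freemod n. (\<lambda>i. c * x i) \<in> N" by simp
  have "(\<lambda>i. if i = j then c else 0) \<in> N" if "j < n" for j
  proof -
    have "(\<lambda>i. if i = j then 1 else 0) \<in> freemod n"
      using that unfolding freemod_def by simp
    from bspec[OF c this] have "(\<lambda>i. c * (if i = j then 1 else 0)) \<in> N" .
    then show ?thesis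
      by (simp add: if_distrib[of "\<lambda>t. c * t"] cong: if_cong)
  qed
  then show "c \<in> char_ideal n N"
    using char_ideal_memI[OF assms(1,3)] by blast
qed

lemma kernel_submodule:
  fixes scale :: "'a::comm_ring_1 \<Rightarrow> 'm::ab_group_add \<Rightarrow> 'm" and f :: "(nat \<Rightarrow> 'a) \<Rightarrow> 'm"
  assumes "module scale"
    and add: "\<forall>x\<in>freemod n. \<forall>y\<in>freemod n. f (\<lambda>i. x i + y i) = f x + f y"
    and smult: "\<forall>r. \<forall>x\<in>freemod n. f (\<lambda>i. r * x i) = scale r (f x)"
  shows "submodule n {x \<in> freemod n. f x = 0}"
  unfolding submodule_def
proof (intro conjI ballI allI)
  have "(\<lambda>i. 0) \<in> freemod n"
    unfolding freemod_def by simp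
  from smult[rule_format, OF this, of 0] have "f (\<lambda>i. 0 * 0) = scale 0 (f (\<lambda>i. 0))" .
  then show "(\<lambda>i. 0) \<in> {x \<in> freemod n. f x = 0}"
    using module.scale_zero_left[OF assms(1)] unfolding freemod_def by simp
next
  fix x y assume "x \<in> {x \<in> freemod n. f x = 0}" "y \<in> {x \<in> freemod n. f x = 0}"
  then show "(\<lambda>i. x i + y i) \<in> {x \<in> freemod n. f x = 0}"
    using add unfolding freemod_def by simp
next
  fix r x assume "x \<in> {x \<in> freemod n. f x = 0}"
  then show "(\<lambda>i. r * x i) \<in> {x \<in> freemod n. f x = 0}"
    using smult module.scale_zero_right[OF assms(1)] unfolding freemod_def by simp
qed auto

lemma annihilator_eq_colon_kernel:
  fixes scale :: "'a::comm_ring_1 \<Rightarrow> 'm::ab_group_add \<Rightarrow> 'm" and f :: "(nat \<Rightarrow> 'a) \<Rightarrow> 'm"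
  assumes smult: "\<forall>r. \<forall>x\<in>freemod n. f (\<lambda>i. r * x i) = scale r (f x)"
    and onto: "f ` freemod n = UNIV"
  shows "annihilator scale = {c. \<forall>x\<in>freemod n. (\<lambda>i. c * x i) \<in> {x \<in> freemod n. f x = 0}}"
proof -
  have "(\<lambda>i. c * x i) \<in> freemod n" if "x \<in> freemod n" for c x
    using that unfolding freemod_def by simp
  then have "(\<forall>x\<in>freemod n. (\<lambda>i. c * x i) \<in> {x \<in> freemod n. f x = 0}) \<longleftrightarrow>
      (\<forall>x\<in>freemod n. scale c (f x) = 0)" for c
    using smult by auto
  also have "(\<forall>x\<in>freemod n. scale c (f x) = 0) \<longleftrightarrow> (\<forall>m. scale c m = 0)" for c
    using onto by (metis UNIV_I image_iff)
  finally show ?thesis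
    unfolding annihilator_def by blast
qed

theorem propositionC8:
  fixes scale :: "'a::comm_ring_1 \<Rightarrow> 'm::ab_group_add \<Rightarrow> 'm"
    and n :: nat and f :: "(nat \<Rightarrow> 'a) \<Rightarrow> 'm"
  assumes "zero_dim_gorenstein TYPE('a)"
    and "module scale"
    and "n > 0"
    and "\<forall>x\<in>freemod n. \<forall>y\<in>freemod n. f (\<lambda>i. x i + y i) = f x + f y"
    and "\<forall>r. \<forall>x\<in>freemod n. f (\<lambda>i. r * x i) = scale r (f x)"
    and "f ` freemod n = UNIV"
  shows "char_ideal n {x \<in> freemod n. f x = 0} = annihilator scale"
proof -
  have inj: "self_injective TYPE('a)" and noeth: "noetherian_ring TYPE('a)"
    using assms(1) unfolding zero_dim_gorenstein_def by auto
  show ?thesis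
    unfolding annihilator_eq_colon_kernel[OF assms(5,6)]
    by (rule char_ideal_eq_colon[OF inj noeth kernel_submodule[OF assms(2,4,5)]])
qed

end
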